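(* Let $r_0\ge r_1\ge0$ be integers and $k\ge 2r_0+1$. Let $T$ be a triangle, $e\in\Delta_1(T)$ an edge with a fixed unit normal $n_e$. Then the space $\mathbb P_k\big(D(e,r_1)\setminus D(\Delta_0(e),r_0)\big)$ is uniquely determined by the values $$\int_e\frac{\partial^\beta u}{\partial n_e^\beta}\lambda_e^{\alpha_e}\,\mathrm ds,\qquad \alpha_e\in\mathbb T^1_{k-2(r_0+1)+\beta},\ \beta=0,1,\dots,r_1.$$
   Context: $T$ has vertices $\texttt v_0,\texttt v_1,\texttt v_2$ and barycentric coordinates $\lambda_0,\lambda_1,\lambda_2$. $\mathbb N$ includes $0$; $\mathbb T^d_j=\{\alpha\in\mathbb N^{d+1}:\sum_i\alpha_i=j\}$ (empty if $j<0$); $\lambda^\alpha=\prod_i\lambda_i^{\alpha_i}$; for $S\subseteq\mathbb T^2_k$, $\mathbb P_k(S)=\mathrm{span}\{\lambda^\alpha:\alpha\in S\}$. A face $f$ (vertex or edge) is identified with its vertex index set, $f^*$ is the complement in $\{0,1,2\}$, $D(f,r)=\{\alpha\in\mathbb T^2_k:\sum_{i\in f^*}\alpha_i\le r\}$, and $D(\Delta_0(e),r_0)$ is the union of $D(\texttt v,r_0)$ over the two vertices $\texttt v$ of $e$. If $e$ has vertices $\texttt v_{e(0)},\texttt v_{e(1)}$, then for $\alpha_e=(a,b)$, $\lambda_e^{\alpha_e}=\lambda_{e(0)}^a\lambda_{e(1)}^b$. "Uniquely determined" means the linear map from the space to the listed values is a bijection. *)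

theory Defs
  imports "HOL-Analysis.Analysis"
begin

type_synonym pt = "real \<times> real"

definition det2 :: "pt \<Rightarrow> pt \<Rightarrow> real" where
  "det2 a b = fst a * snd b - snd a * fst b"

definition nondeg_triangle :: "(nat \<Rightarrow> pt) \<Rightarrow> bool" where
  "nondeg_triangle V \<longleftrightarrow> det2 (V 1 - V 0) (V 2 - V 0) \<noteq> 0"

definition bary :: "(nat \<Rightarrow> pt) \<Rightarrow> nat \<Rightarrow> pt \<Rightarrow> real" where
  "bary V i x = det2 (V ((i+1) mod 3) - x) (V ((i+2) mod 3) - x)
              / det2 (V ((i+1) mod 3) - V i) (V ((i+2) mod 3) - V i)"

definition T2 :: "nat \<Rightarrow> (nat \<Rightarrow> nat) set" where
  "T2 k = {\<alpha>. (\<forall>i>2. \<alpha> i = 0) \<and> \<alpha> 0 + \<alpha> 1 + \<alpha> 2 = k}"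

definition bary_mono :: "(nat \<Rightarrow> pt) \<Rightarrow> (nat \<Rightarrow> nat) \<Rightarrow> pt \<Rightarrow> real" where
  "bary_mono V \<alpha> x = (\<Prod>i<3. bary V i x ^ \<alpha> i)"

definition Pk :: "(nat \<Rightarrow> pt) \<Rightarrow> (nat \<Rightarrow> nat) set \<Rightarrow> (pt \<Rightarrow> real) set" where
  "Pk V S = {u. \<exists>c. u = (\<lambda>x. \<Sum>\<alpha>\<in>S. c \<alpha> * bary_mono V \<alpha> x)}"

text \<open>D(f,r) for a face f given by its vertex index set.\<close>
definition D :: "nat \<Rightarrow> nat set \<Rightarrow> nat \<Rightarrow> (nat \<Rightarrow> nat) set" where
  "D k f r = {\<alpha> \<in> T2 k. (\<Sum>i\<in>{0,1,2} - f. \<alpha> i) \<le> r}"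

definition ndir_deriv :: "nat \<Rightarrow> (pt \<Rightarrow> real) \<Rightarrow> pt \<Rightarrow> pt \<Rightarrow> real" where
  "ndir_deriv \<beta> u n x = (deriv ^^ \<beta>) (\<lambda>t. u (x + t *\<^sub>R n)) 0"

definition edge_moment ::
  "(nat \<Rightarrow> pt) \<Rightarrow> nat \<Rightarrow> nat \<Rightarrow> pt \<Rightarrow> nat \<Rightarrow> nat \<Rightarrow> nat \<Rightarrow> (pt \<Rightarrow> real) \<Rightarrow> real" where
  "edge_moment V i j n \<beta> a b u =
     dist (V i) (V j) * integral {0..1} (\<lambda>s::real.
        (let x = V i + s *\<^sub>R (V j - V i) in
           ndir_deriv \<beta> u n x * bary V i x ^ a * bary V j x ^ b))"

end

(*
  Let m be the vertex opposite to e.  Since lambda_m vanishes on e, the beta-th normal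
  derivative of lambda^alpha vanishes on e if alpha_m > beta, and equals
  beta! (d lambda_m / dn)^beta lambda_i^alpha_i lambda_j^alpha_j if alpha_m = beta, with
  d lambda_m / dn nonzero.  So the moment conditions are triangular in alpha_m.
  For alpha_m = beta, leaving out the vertex regions D(Delta_0(e), r0) forces
  alpha_i, alpha_j >= q := r0 + 1 - beta, so on e the beta-th normal derivative is
  (lambda_i lambda_j)^q h with h of degree d := k + beta - 2 (r0 + 1), and the moments of order
  beta pair (lambda_i lambda_j)^q h with all monomials of degree d.  Pairing with h itself shows
  that the integral of (lambda_i lambda_j)^q h^2 over e vanishes, so h = 0 and, by the
  independence of the Bernstein monomials, so do all coefficients with alpha_m = beta.
  Matching the multi-index with alpha_m = beta, alpha_i = a + q, alpha_j = b + q to the moment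
  (beta, a, b) makes the moment map an injective square linear system, hence a bijection.
*)

theory Submission
  imports Defs "HOL-Computational_Algebra.Polynomial" "HOL-Library.Function_Algebras"
begin

section \<open>Barycentric coordinates\<close>

definition bary_slope :: "(nat \<Rightarrow> pt) \<Rightarrow> nat \<Rightarrow> pt \<Rightarrow> real" where
  "bary_slope V l w = det2 w (V ((l+1) mod 3) - V ((l+2) mod 3))
                      / det2 (V ((l+1) mod 3) - V l) (V ((l+2) mod 3) - V l)"

lemma det2_diff_add_scaleR:
  "det2 (A - (x + t *\<^sub>R w)) (B - (x + t *\<^sub>R w)) = det2 (A - x) (B - x) + t * det2 w (A - B)"
  by (simp add: det2_def algebra_simps)

lemma bary_add_scaleR: "bary V l (x + t *\<^sub>R w) = bary V l x + t * bary_slope V l w"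
  unfolding bary_def bary_slope_def det2_diff_add_scaleR by (simp add: add_divide_distrib)

lemma bary_denominator_cyclic:
  fixes V :: "nat \<Rightarrow> pt"
  assumes "l < 3"
  shows "det2 (V ((l+1) mod 3) - V l) (V ((l+2) mod 3) - V l) = det2 (V 1 - V 0) (V 2 - V 0)"
proof -
  have "l = 0 \<or> l = 1 \<or> l = 2" using assms by auto
  then show ?thesis by (auto simp: det2_def algebra_simps numeral_2_eq_2)
qed

lemma bary_vertex:
  assumes "nondeg_triangle V" "l < 3" "l' < 3"
  shows "bary V l (V l') = (if l = l' then 1 else 0)"
proof -
  have "l = 0 \<or> l = 1 \<or> l = 2" "l' = 0 \<or> l' = 1 \<or> l' = 2" using assms(2,3) by auto
  then show ?thesis
    using assms(1) bary_denominator_cyclic[OF assms(2), of V]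
    unfolding nondeg_triangle_def bary_def by (auto simp: det2_def numeral_2_eq_2)
qed

lemma det2_orthogonal_nonzero:
  fixes n d :: pt
  assumes "inner n d = 0" "n \<noteq> 0" "d \<noteq> 0"
  shows "det2 n d \<noteq> 0"
proof
  assume "det2 n d = 0"
  obtain n1 n2 d1 d2 where nd: "n = (n1, n2)" "d = (d1, d2)" by fastforce
  have "n1 * d1 + n2 * d2 = 0" "n1 * d2 - n2 * d1 = 0"
    using assms(1) \<open>det2 n d = 0\<close> nd by (simp_all add: inner_Pair det2_def)
  then have "(n1^2 + n2^2) * d1 = 0" "(n1^2 + n2^2) * d2 = 0"
    by algebra+
  moreover have "n1^2 + n2^2 \<noteq> 0"
    using assms(2) nd by (simp add: sum_power2_eq_zero_iff zero_prod_def)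
  ultimately show False using assms(3) nd by (auto simp: zero_prod_def)
qed

section \<open>Barycentric polynomials along lines\<close>

lemma higher_deriv_poly:
  fixes p :: "'a::real_normed_field poly"
  shows "(deriv ^^ b) (poly p) = poly ((pderiv ^^ b) p)"
proof (induction b)
  case (Suc b)
  have "deriv (poly q) = poly (pderiv q)" for q :: "'a poly"
    by (rule ext, rule DERIV_imp_deriv) simp
  then show ?case using Suc by simp
qed simp

lemma ndir_deriv_eq_coeff:
  assumes "\<And>t. u (x + t *\<^sub>R n) = poly P t"
  shows "ndir_deriv b u n x = fact b * coeff P b"
proof -
  have "(\<lambda>t. u (x + t *\<^sub>R n)) = poly P" using assms by auto
  then show ?thesis
    by (simp add: ndir_deriv_def higher_deriv_poly poly_0_coeff_0 coeff_higher_pderiv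
        pochhammer_fact)
qed

definition bary_mono_line :: "(nat \<Rightarrow> pt) \<Rightarrow> (nat \<Rightarrow> nat) \<Rightarrow> pt \<Rightarrow> pt \<Rightarrow> real poly" where
  "bary_mono_line V \<alpha> x w = (\<Prod>l<3. [:bary V l x, bary_slope V l w:] ^ \<alpha> l)"

lemma poly_bary_mono_line: "poly (bary_mono_line V \<alpha> x w) t = bary_mono V \<alpha> (x + t *\<^sub>R w)"
  by (simp add: bary_mono_line_def bary_mono_def poly_prod bary_add_scaleR algebra_simps)

lemma ndir_deriv_bary_mono:
  "ndir_deriv b (bary_mono V \<alpha>) n x = fact b * coeff (bary_mono_line V \<alpha> x n) b"
  by (rule ndir_deriv_eq_coeff) (simp add: poly_bary_mono_line)

lemma ndir_deriv_bary_sum: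
  "ndir_deriv b (\<lambda>x. \<Sum>t\<in>S. c t * bary_mono V (f t) x) n x
     = fact b * (\<Sum>t\<in>S. c t * coeff (bary_mono_line V (f t) x n) b)"
proof -
  have "ndir_deriv b (\<lambda>x. \<Sum>t\<in>S. c t * bary_mono V (f t) x) n x
     = fact b * coeff (\<Sum>t\<in>S. smult (c t) (bary_mono_line V (f t) x n)) b"
    by (rule ndir_deriv_eq_coeff) (simp add: poly_sum poly_bary_mono_line)
  then show ?thesis by (simp add: coeff_sum)
qed

lemma Pk_reindex:
  assumes "bij_betw f B S"
  shows "Pk V S = {u. \<exists>c. u = (\<lambda>x. \<Sum>t\<in>B. c t * bary_mono V (f t) x)}"
proof -
  have reindex: "(\<lambda>x. \<Sum>\<alpha>\<in>S. c \<alpha> * bary_mono V \<alpha> x)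
      = (\<lambda>x. \<Sum>t\<in>B. c (f t) * bary_mono V (f t) x)" for c
    using sum.reindex_bij_betw[OF assms, of "\<lambda>\<alpha>. c \<alpha> * bary_mono V \<alpha> _"] by simp
  have "(\<exists>c. u = (\<lambda>x. \<Sum>t\<in>B. c (f t) * bary_mono V (f t) x))
      \<longleftrightarrow> (\<exists>c. u = (\<lambda>x. \<Sum>t\<in>B. c t * bary_mono V (f t) x))" for u
  proof
    assume "\<exists>c. u = (\<lambda>x. \<Sum>t\<in>B. c (f t) * bary_mono V (f t) x)"
    then obtain c where "u = (\<lambda>x. \<Sum>t\<in>B. c (f t) * bary_mono V (f t) x)" by blast
    then show "\<exists>c. u = (\<lambda>x. \<Sum>t\<in>B. c t * bary_mono V (f t) x)"
      by (intro exI[of _ "\<lambda>t. c (f t)"])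
  next
    assume "\<exists>c. u = (\<lambda>x. \<Sum>t\<in>B. c t * bary_mono V (f t) x)"
    then obtain c where "u = (\<lambda>x. \<Sum>t\<in>B. c t * bary_mono V (f t) x)" by blast
    then show "\<exists>c. u = (\<lambda>x. \<Sum>t\<in>B. c (f t) * bary_mono V (f t) x)"
      using bij_betw_inv_into_left[OF assms]
      by (intro exI[of _ "\<lambda>\<alpha>. c (inv_into B f \<alpha>)"]) (auto intro!: sum.cong)
  qed
  then show ?thesis
    unfolding Pk_def reindex by simp
qed

section \<open>Linearity of the edge moments\<close>

definition coeffs_continuous_on ::
    "'a::topological_space set \<Rightarrow> ('a \<Rightarrow> 'b::real_normed_field poly) \<Rightarrow> bool" where
  "coeffs_continuous_on A P \<longleftrightarrow> (\<forall>m. continuous_on A (\<lambda>s. coeff (P s) m))"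

lemma coeffs_continuous_on_mult:
  "coeffs_continuous_on A P \<Longrightarrow> coeffs_continuous_on A Q \<Longrightarrow> coeffs_continuous_on A (\<lambda>s. P s * Q s)"
  unfolding coeffs_continuous_on_def coeff_mult by (auto intro!: continuous_intros)

lemma coeffs_continuous_on_power:
  "coeffs_continuous_on A P \<Longrightarrow> coeffs_continuous_on A (\<lambda>s. P s ^ e)"
proof (induction e)
  case 0
  show ?case by (simp add: coeffs_continuous_on_def coeff_1 continuous_on_const)
qed (simp add: coeffs_continuous_on_mult)

lemma coeffs_continuous_on_prod:
  "(\<And>l. l \<in> L \<Longrightarrow> coeffs_continuous_on A (P l)) \<Longrightarrow> coeffs_continuous_on A (\<lambda>s. \<Prod>l\<in>L. P l s)"
proof (induction L rule: infinite_finite_induct)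
  case (insert l L)
  then show ?case by (simp add: coeffs_continuous_on_mult)
qed (simp_all add: coeffs_continuous_on_def coeff_1 continuous_on_const)

lemma coeffs_continuous_on_linear:
  assumes "continuous_on A f"
  shows "coeffs_continuous_on A (\<lambda>s. [:f s, g:])"
  unfolding coeffs_continuous_on_def
proof
  fix m
  show "continuous_on A (\<lambda>s. coeff [:f s, g:] m)"
    using assms by (cases m) (auto simp: coeff_pCons split: nat.split intro: continuous_on_const)
qed

lemma continuous_on_coeff_bary_mono_line:
  "continuous_on A (\<lambda>s. coeff (bary_mono_line V \<alpha> (x + s *\<^sub>R d) w) b)"
proof -
  have "coeffs_continuous_on A (\<lambda>s. bary_mono_line V \<alpha> (x + s *\<^sub>R d) w)"
    unfolding bary_mono_line_def bary_add_scaleR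
    by (intro coeffs_continuous_on_prod coeffs_continuous_on_power coeffs_continuous_on_linear
        continuous_intros)
  then show ?thesis by (simp add: coeffs_continuous_on_def)
qed

lemma edge_moment_sum:
  assumes "finite S"
  shows "edge_moment V i j n \<beta> a b (\<lambda>x. \<Sum>t\<in>S. c t * bary_mono V (f t) x)
           = (\<Sum>t\<in>S. c t * edge_moment V i j n \<beta> a b (bary_mono V (f t)))"
proof -
  define x where "x s = V i + s *\<^sub>R (V j - V i)" for s
  define F where "F \<alpha> = (\<lambda>s. fact \<beta> * coeff (bary_mono_line V \<alpha> (x s) n) \<beta> * bary V i (x s) ^ a
    * bary V j (x s) ^ b)" for \<alpha>
  have moment: "edge_moment V i j n \<beta> a b (bary_mono V \<alpha>)
      = dist (V i) (V j) * integral {0..1} (F \<alpha>)" for \<alpha>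
    by (simp add: edge_moment_def ndir_deriv_bary_mono F_def x_def Let_def)
  have "(\<lambda>s. c t * F (f t) s) integrable_on {0..1}" for t
    unfolding F_def x_def bary_add_scaleR
    by (intro integrable_continuous_interval continuous_intros continuous_on_coeff_bary_mono_line)
  then have "integral {0..1} (\<lambda>s. \<Sum>t\<in>S. c t * F (f t) s) = (\<Sum>t\<in>S. c t * integral {0..1} (F (f t)))"
    by (simp add: integral_sum[OF assms])
  moreover have "edge_moment V i j n \<beta> a b (\<lambda>x. \<Sum>t\<in>S. c t * bary_mono V (f t) x)
      = dist (V i) (V j) * integral {0..1} (\<lambda>s. \<Sum>t\<in>S. c t * F (f t) s)"
    by (simp add: edge_moment_def ndir_deriv_bary_sum F_def x_def Let_def sum_distrib_left
        sum_distrib_right mult_ac)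
  ultimately show ?thesis by (simp add: moment sum_distrib_left mult_ac)
qed

section \<open>Bernstein polynomials\<close>

lemma bernstein_monomials_independent:
  fixes C :: "nat \<times> nat \<Rightarrow> real"
  assumes A: "A \<subseteq> {(a, b). a + b = d}"
    and zero: "\<And>s. 0 < s \<Longrightarrow> s < 1 \<Longrightarrow> (\<Sum>(a, b)\<in>A. C (a, b) * (1 - s) ^ a * s ^ b) = 0"
  shows "\<forall>x\<in>A. C x = 0"
proof -
  define D where "D e = (if (d - e, e) \<in> A then C (d - e, e) else 0)" for e
  have A_pairs: "a = d - b" "b \<le> d" if "(a, b) \<in> A" for a b
    using that A by auto
  have inj: "inj_on snd A"
    by (auto simp: inj_on_def dest!: subsetD[OF A])
  have D_on: "D (snd x) = C x" if "x \<in> A" for x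
    using that A_pairs(1) by (cases x) (auto simp: D_def)
  have D_off: "D e = 0" if "e \<notin> snd ` A" for e
    using that by (auto simp: D_def image_iff)
  have "(\<Sum>e\<le>d. D e * t ^ e) = 0" if "0 < t" for t :: real
  proof -
    define s where "s = t / (1 + t)"
    have "0 < s" "s < 1" using that by (auto simp: s_def)
    have monomial: "(1 - s) ^ a * s ^ b = t ^ b / (1 + t) ^ d" if "a + b = d" for a b
      using \<open>0 < t\<close> by (simp add: s_def field_simps flip: power_add that)
    have "(\<Sum>e\<le>d. D e * t ^ e) = (\<Sum>e\<in>snd ` A. D e * t ^ e)"
      by (rule sum.mono_neutral_right) (auto simp: D_off A_pairs(2) split: prod.splits)
    also have "\<dots> = (\<Sum>(a, b)\<in>A. C (a, b) * t ^ b)"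
      by (simp add: sum.reindex[OF inj] D_on split_def)
    also have "\<dots> = (1 + t) ^ d * (\<Sum>(a, b)\<in>A. C (a, b) * (1 - s) ^ a * s ^ b)"
      using A \<open>0 < t\<close>
      by (auto simp: sum_distrib_left monomial mult.assoc intro!: sum.cong)
    finally show ?thesis using zero[OF \<open>0 < s\<close> \<open>s < 1\<close>] by simp
  qed
  then have "{0<..} \<subseteq> {t::real. (\<Sum>e\<le>d. D e * t ^ e) = 0}" by auto
  then have "infinite {t::real. (\<Sum>e\<le>d. D e * t ^ e) = 0}"
    using infinite_Ioi finite_subset by blast
  then have "\<forall>e\<le>d. D e = 0" using polyfun_finite_roots by blast
  then show ?thesis using A_pairs(2) D_on by force
qed

lemma weighted_bernstein_orthogonal_imp_zero:
  fixes C :: "nat \<times> nat \<Rightarrow> real"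
  assumes A: "A \<subseteq> {(a, b). a + b = d}"
    and h: "h = (\<lambda>s. \<Sum>(a, b)\<in>A. C (a, b) * (1 - s) ^ a * s ^ b)"
    and orthogonal: "\<And>a b. (a, b) \<in> A \<Longrightarrow>
      integral {0..1} (\<lambda>s. ((1 - s) * s) ^ q * h s * (1 - s) ^ a * s ^ b) = 0"
  shows "\<forall>x\<in>A. C x = 0"
proof (rule bernstein_monomials_independent[OF A])
  have "finite A"
    by (rule finite_subset[OF A], rule finite_subset[of _ "{..d} \<times> {..d}"]) auto
  have continuous: "continuous_on {0..1} h"
    unfolding h split_def by (intro continuous_intros)
  define g where "g a b = (\<lambda>s. ((1 - s) * s) ^ q * h s * (1 - s) ^ a * s ^ b)" for a b
  have "((1 - s) * s) ^ q * h s ^ 2 = (\<Sum>(a, b)\<in>A. C (a, b) * g a b s)" for s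
  proof -
    have "h s * h s = (\<Sum>(a, b)\<in>A. C (a, b) * ((1 - s) ^ a * s ^ b) * h s)"
      unfolding h by (simp add: sum_distrib_right split_def mult.assoc)
    then show ?thesis
      by (simp add: g_def power2_eq_square sum_distrib_left split_def mult.assoc mult_ac)
  qed
  moreover have "(\<lambda>s. C x * g (fst x) (snd x) s) integrable_on {0..1}" for x
    unfolding g_def by (intro integrable_continuous_interval continuous_intros continuous)
  ultimately have "integral {0..1} (\<lambda>s. ((1 - s) * s) ^ q * h s ^ 2)
      = (\<Sum>(a, b)\<in>A. C (a, b) * integral {0..1} (g a b))"
    by (simp add: integral_sum[OF \<open>finite A\<close>] split_def)
  also have "\<dots> = 0" using orthogonal by (simp add: g_def split_def)
  finally have "((\<lambda>s. ((1 - s) * s) ^ q * h s ^ 2) has_integral 0) {0..1}"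
    using integrable_continuous_interval[of 0 1 "\<lambda>s. ((1 - s) * s) ^ q * h s ^ 2"] continuous
    by (simp add: has_integral_integrable_integral continuous_intros)
  then have "((1 - s) * s) ^ q * h s ^ 2 = 0" if "0 < s" "s < 1" for s
    by (intro has_integral_0_cbox_imp_0[of 0 1])
      (use that continuous in \<open>auto intro!: continuous_intros\<close>)
  then have "h s = 0" if "0 < s" "s < 1" for s
    using that by simp
  then show "\<And>s. 0 < s \<Longrightarrow> s < 1 \<Longrightarrow> (\<Sum>(a, b)\<in>A. C (a, b) * (1 - s) ^ a * s ^ b) = 0"
    by (simp add: h)
qed
section \<open>Square linear systems\<close>

interpretation real_fun: vector_space "\<lambda>(r::real) (f::'a \<Rightarrow> real) x. r * f x"
  by unfold_locales (auto simp: fun_eq_iff algebra_simps)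

lemma sum_fun_apply: "(\<Sum>s\<in>S. f s) x = (\<Sum>s\<in>S. f s x)"
  by (induction S rule: infinite_finite_induct) auto

lemma real_fun_span_supported:
  fixes U :: "('a \<Rightarrow> real) set"
  assumes "finite B" "real_fun.independent U" "card U = card B"
    and "\<And>u t. u \<in> U \<Longrightarrow> t \<notin> B \<Longrightarrow> u t = 0"
    and "\<And>t. t \<notin> B \<Longrightarrow> f t = 0"
  shows "f \<in> real_fun.span U"
proof (rule ccontr)
  define \<delta> where "\<delta> s = (\<lambda>t. if t = s then 1 else 0 :: real)" for s :: 'a
  have supported: "g \<in> real_fun.span (\<delta> ` B)" if "\<And>t. t \<notin> B \<Longrightarrow> g t = 0" for g
  proof -
    have "g = (\<Sum>s\<in>B. (\<lambda>t. g s * \<delta> s t))"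
      using that by (auto simp: fun_eq_iff sum_fun_apply \<delta>_def assms(1) if_distrib cong: if_cong)
    also have "\<dots> \<in> real_fun.span (\<delta> ` B)"
      by (intro real_fun.span_sum real_fun.span_scale real_fun.span_base) auto
    finally show ?thesis .
  qed
  assume f: "f \<notin> real_fun.span U"
  then have "f \<notin> U" using real_fun.span_base[of f U] by blast
  have "real_fun.independent (insert f U)"
    using real_fun.independent_insertI[OF f assms(2)] .
  moreover have "insert f U \<subseteq> real_fun.span (\<delta> ` B)"
    using assms(4,5) by (auto intro!: supported)
  ultimately have "finite U" "card (insert f U) \<le> card (\<delta> ` B)"
    using real_fun.independent_span_bound[of "\<delta> ` B" "insert f U"] \<open>finite B\<close> by auto
  moreover have "card (\<delta> ` B) \<le> card B" by (rule card_image_le[OF \<open>finite B\<close>])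
  ultimately show False
    using \<open>f \<notin> U\<close> assms(3) by simp
qed

lemma square_linear_system_solvable:
  fixes v :: "'a \<Rightarrow> 'a \<Rightarrow> real"
  assumes "finite B"
    and injective: "\<And>c. \<forall>t\<in>B. (\<Sum>s\<in>B. c s * v s t) = 0 \<Longrightarrow> \<forall>s\<in>B. c s = 0"
  shows "\<exists>c. \<forall>t\<in>B. (\<Sum>s\<in>B. c s * v s t) = w t"
proof -
  define col where "col s = (\<lambda>t. if t \<in> B then v s t else 0)" for s
  have combination: "(\<Sum>s\<in>B. (\<lambda>t. c s * col s t)) t = (\<Sum>s\<in>B. c s * v s t)" if "t \<in> B" for c t
    using that by (simp add: sum_fun_apply col_def)
  have inj: "inj_on col B"
  proof (rule inj_onI, rule ccontr)
    fix s s' assume s: "s \<in> B" "s' \<in> B" "col s = col s'" "s \<noteq> s'"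
    define c where "c r = (of_bool (r = s) - of_bool (r = s') :: real)" for r
    have "(\<Sum>r\<in>B. c r * v r t) = v s t - v s' t" for t
      using s \<open>finite B\<close> by (simp add: c_def left_diff_distrib sum_subtractf)
    moreover have "v s t = v s' t" if "t \<in> B" for t
      using fun_cong[OF s(3), of t] that by (simp add: col_def)
    ultimately have "\<forall>t\<in>B. (\<Sum>r\<in>B. c r * v r t) = 0" by simp
    then have "\<forall>r\<in>B. c r = 0" by (rule injective)
    then show False using s by (auto simp: c_def)
  qed
  have "real_fun.independent (col ` B)"
  proof (rule real_fun.independent_if_scalars_zero)
    fix f y assume sum: "(\<Sum>x\<in>col ` B. (\<lambda>t. f x * x t)) = 0" and y: "y \<in> col ` B"
    have "\<forall>t\<in>B. (\<Sum>s\<in>B. f (col s) * v s t) = 0"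
      using sum by (simp add: sum.reindex[OF inj] flip: combination)
    then show "f y = 0" using injective[of "\<lambda>s. f (col s)"] y by auto
  qed (use \<open>finite B\<close> in simp)
  then have "(\<lambda>t. if t \<in> B then w t else 0) \<in> real_fun.span (col ` B)"
    by (rule real_fun_span_supported[OF \<open>finite B\<close>])
      (use card_image[OF inj] in \<open>auto simp: col_def\<close>)
  then obtain u where "(\<Sum>x\<in>col ` B. (\<lambda>t. u x * x t)) = (\<lambda>t. if t \<in> B then w t else 0)"
    using real_fun.span_finite[of "col ` B"] \<open>finite B\<close> by auto
  then have "\<forall>t\<in>B. (\<Sum>s\<in>B. u (col s) * v s t) = w t"
    by (auto simp: sum.reindex[OF inj] simp flip: combination dest: fun_cong)
  then show ?thesis by (intro exI[of _ "\<lambda>s. u (col s)"])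
qed

lemma bij_betw_restrict_unisolvent:
  fixes \<phi> :: "'a \<Rightarrow> 'x \<Rightarrow> real" and L :: "('x \<Rightarrow> real) \<Rightarrow> 'a \<Rightarrow> real"
  assumes "finite B"
    and linear: "\<And>c t. t \<in> B \<Longrightarrow> L (\<lambda>x. \<Sum>s\<in>B. c s * \<phi> s x) t = (\<Sum>s\<in>B. c s * L (\<phi> s) t)"
    and unisolvent: "\<And>c. (\<And>t. t \<in> B \<Longrightarrow> L (\<lambda>x. \<Sum>s\<in>B. c s * \<phi> s x) t = 0) \<Longrightarrow> \<forall>s\<in>B. c s = 0"
  shows "bij_betw (\<lambda>u. restrict (L u) B) {u. \<exists>c. u = (\<lambda>x. \<Sum>s\<in>B. c s * \<phi> s x)} (B \<rightarrow>\<^sub>E UNIV)"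
proof (rule bij_betw_imageI)
  show "inj_on (\<lambda>u. restrict (L u) B) {u. \<exists>c. u = (\<lambda>x. \<Sum>s\<in>B. c s * \<phi> s x)}"
  proof (rule inj_onI, clarify)
    fix c1 c2
    assume eq: "restrict (L (\<lambda>x. \<Sum>s\<in>B. c1 s * \<phi> s x)) B = restrict (L (\<lambda>x. \<Sum>s\<in>B. c2 s * \<phi> s x)) B"
    have "L (\<lambda>x. \<Sum>s\<in>B. (c1 s - c2 s) * \<phi> s x) t = 0" if "t \<in> B" for t
    proof -
      have "L (\<lambda>x. \<Sum>s\<in>B. (c1 s - c2 s) * \<phi> s x) t = (\<Sum>s\<in>B. (c1 s - c2 s) * L (\<phi> s) t)"
        by (rule linear[OF that])
      also have "\<dots> = L (\<lambda>x. \<Sum>s\<in>B. c1 s * \<phi> s x) t - L (\<lambda>x. \<Sum>s\<in>B. c2 s * \<phi> s x) t"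
        by (simp add: linear[OF that] left_diff_distrib sum_subtractf)
      also have "\<dots> = 0"
        using fun_cong[OF eq, of t] that by simp
      finally show ?thesis .
    qed
    then have "\<forall>s\<in>B. c1 s - c2 s = 0" by (rule unisolvent)
    then show "(\<lambda>x. \<Sum>s\<in>B. c1 s * \<phi> s x) = (\<lambda>x. \<Sum>s\<in>B. c2 s * \<phi> s x)"
      by (auto intro!: sum.cong)
  qed
  show "(\<lambda>u. restrict (L u) B) ` {u. \<exists>c. u = (\<lambda>x. \<Sum>s\<in>B. c s * \<phi> s x)} = B \<rightarrow>\<^sub>E UNIV"
  proof
    show "B \<rightarrow>\<^sub>E UNIV \<subseteq> (\<lambda>u. restrict (L u) B) ` {u. \<exists>c. u = (\<lambda>x. \<Sum>s\<in>B. c s * \<phi> s x)}"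
    proof
      fix w :: "'a \<Rightarrow> real" assume w: "w \<in> B \<rightarrow>\<^sub>E UNIV"
      have "\<exists>c. \<forall>t\<in>B. (\<Sum>s\<in>B. c s * L (\<phi> s) t) = w t"
        by (rule square_linear_system_solvable[OF \<open>finite B\<close>]) (use unisolvent linear in auto)
      then obtain c where c: "\<forall>t\<in>B. (\<Sum>s\<in>B. c s * L (\<phi> s) t) = w t" by blast
      have "restrict (L (\<lambda>x. \<Sum>s\<in>B. c s * \<phi> s x)) B = w"
        using w c by (auto simp: linear restrict_def PiE_def extensional_def fun_eq_iff)
      then show "w \<in> (\<lambda>u. restrict (L u) B) ` {u. \<exists>c. u = (\<lambda>x. \<Sum>s\<in>B. c s * \<phi> s x)}"
        by blast
    qed
  qed auto
qed

section \<open>The moments on an edge\<close>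

locale triangle_edge =
  fixes V :: "nat \<Rightarrow> pt" and i j m :: nat
  assumes nondeg: "nondeg_triangle V"
    and indices: "i < 3" "j < 3" "m < 3" "i \<noteq> j" "i \<noteq> m" "j \<noteq> m"
begin

lemma lessThan_3_eq: "{..<3} = {i, j, m}"
  using indices by (auto simp: less_Suc_eq numeral_3_eq_3)

lemma edge_vertices_distinct: "V i \<noteq> V j"
  using bary_vertex[OF nondeg, of i i] bary_vertex[OF nondeg, of i j] indices by auto

lemma bary_edge:
  assumes "l < 3"
  shows "bary V l (V i + s *\<^sub>R (V j - V i)) = (if l = i then 1 - s else if l = j then s else 0)"
proof -
  have "bary_slope V l (V j - V i) = bary V l (V j) - bary V l (V i)"
    using bary_add_scaleR[of V l "V i" 1 "V j - V i"] by simp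
  then show ?thesis
    using assms indices by (auto simp: bary_add_scaleR bary_vertex[OF nondeg])
qed

lemma bary_mono_line_edge:
  "bary_mono_line V \<alpha> (V i + s *\<^sub>R (V j - V i)) w
     = monom (bary_slope V m w ^ \<alpha> m) (\<alpha> m)
       * ([:1 - s, bary_slope V i w:] ^ \<alpha> i * [:s, bary_slope V j w:] ^ \<alpha> j)"
proof -
  let ?x = "V i + s *\<^sub>R (V j - V i)"
  have "bary_mono_line V \<alpha> ?x w
      = [:0, bary_slope V m w:] ^ \<alpha> m
        * ([:1 - s, bary_slope V i w:] ^ \<alpha> i * [:s, bary_slope V j w:] ^ \<alpha> j)"
    using indices
    by (simp add: bary_mono_line_def lessThan_3_eq bary_edge mult_ac
        del: mult_pCons_left mult_pCons_right)
  also have "[:0, bary_slope V m w:] ^ \<alpha> m = monom (bary_slope V m w ^ \<alpha> m) (\<alpha> m)"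
    by (metis monom_0 monom_Suc monom_power mult_1 One_nat_def)
  finally show ?thesis .
qed

lemma coeff_bary_mono_line_edge:
  assumes "\<beta> \<le> \<alpha> m"
  shows "coeff (bary_mono_line V \<alpha> (V i + s *\<^sub>R (V j - V i)) w) \<beta>
           = (if \<beta> = \<alpha> m then bary_slope V m w ^ \<beta> * (1 - s) ^ \<alpha> i * s ^ \<alpha> j else 0)"
  using assms by (auto simp: bary_mono_line_edge coeff_monom_mult coeff_mult_0 coeff_0_power)

lemma bary_slope_normal_nonzero:
  assumes "n \<noteq> 0" "inner n (V j - V i) = 0"
  shows "bary_slope V m n \<noteq> 0"
proof -
  have "det2 n (V j - V i) \<noteq> 0"
    using det2_orthogonal_nonzero assms edge_vertices_distinct by simp
  moreover have "det2 n (V i - V j) = - det2 n (V j - V i)"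
    by (simp add: det2_def algebra_simps)
  moreover have "(m + 1) mod 3 = i \<and> (m + 2) mod 3 = j \<or> (m + 1) mod 3 = j \<and> (m + 2) mod 3 = i"
  proof -
    have "i \<in> {0, 1, 2}" "j \<in> {0, 1, 2}" "m \<in> {0, 1, 2}" using indices by auto
    then show ?thesis using indices(4-6) by auto
  qed
  ultimately have "det2 n (V ((m + 1) mod 3) - V ((m + 2) mod 3)) \<noteq> 0"
    by auto
  then show ?thesis
    using nondeg bary_denominator_cyclic[OF indices(3), of V]
    by (simp add: bary_slope_def nondeg_triangle_def)
qed

end

locale edge_dofs = triangle_edge +
  fixes n :: pt and k r0 r1 :: nat
  assumes normal: "n \<noteq> 0" "inner n (V j - V i) = 0"
    and r1_le_r0: "r1 \<le> r0"
begin

abbreviation edge_indices :: "(nat \<Rightarrow> nat) set" where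
  "edge_indices \<equiv> D k {i, j} r1 - (D k {i} r0 \<union> D k {j} r0)"

definition dofs :: "(nat \<times> nat \<times> nat) set" where
  "dofs = {(\<beta>, a, b). \<beta> \<le> r1 \<and> a + b + 2 * (r0 + 1) = k + \<beta>}"

definition dof_multi_index :: "nat \<times> nat \<times> nat \<Rightarrow> nat \<Rightarrow> nat" where
  "dof_multi_index = (\<lambda>(\<beta>, a, b) l. if l = m then \<beta> else if l = i then a + (r0 + 1 - \<beta>)
     else if l = j then b + (r0 + 1 - \<beta>) else 0)"

lemma finite_dofs: "finite dofs"
proof -
  have "dofs \<subseteq> {..r1} \<times> {..k + r1} \<times> {..k + r1}" by (auto simp: dofs_def)
  then show ?thesis by (rule finite_subset) auto
qed

lemma dof_multi_index_apply:
  "dof_multi_index (\<beta>, a, b) m = \<beta>"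
  "dof_multi_index (\<beta>, a, b) i = a + (r0 + 1 - \<beta>)"
  "dof_multi_index (\<beta>, a, b) j = b + (r0 + 1 - \<beta>)"
  "l \<notin> {i, j, m} \<Longrightarrow> dof_multi_index (\<beta>, a, b) l = 0"
  using indices by (auto simp: dof_multi_index_def)

lemma mem_edge_indices_iff:
  "\<alpha> \<in> edge_indices \<longleftrightarrow>
     (\<forall>l. l \<notin> {i, j, m} \<longrightarrow> \<alpha> l = 0) \<and> \<alpha> i + \<alpha> j + \<alpha> m = k
       \<and> \<alpha> m \<le> r1 \<and> r0 < \<alpha> i + \<alpha> m \<and> r0 < \<alpha> j + \<alpha> m"
proof -
  have vertices: "{0, 1, 2} = {i, j, m}"
    unfolding lessThan_3_eq[symmetric] by auto
  have D_iff: "\<alpha> \<in> D k f r \<longleftrightarrow>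
      (\<forall>l>2. \<alpha> l = 0) \<and> \<alpha> 0 + \<alpha> 1 + \<alpha> 2 = k \<and> (\<Sum>l\<in>{0, 1, 2} - f. \<alpha> l) \<le> r" for f r
    by (simp add: D_def T2_def)
  have outside: "(\<forall>l>2. \<alpha> l = 0) \<longleftrightarrow> (\<forall>l. l \<notin> {i, j, m} \<longrightarrow> \<alpha> l = 0)"
  proof -
    have "l \<notin> {i, j, m} \<longleftrightarrow> 2 < l" for l
      unfolding vertices[symmetric] by auto
    then show ?thesis by (simp only:)
  qed
  have total: "\<alpha> 0 + \<alpha> 1 + \<alpha> 2 = \<alpha> i + \<alpha> j + \<alpha> m"
    using sum.cong[OF vertices refl, of \<alpha>] indices by simp
  have "{0, 1, 2} - {i, j} = {m}" "{0, 1, 2} - {i} = {j, m}" "{0, 1, 2} - {j} = {i, m}"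
    using vertices indices by auto
  then have sums: "(\<Sum>l\<in>{0, 1, 2} - {i, j}. \<alpha> l) = \<alpha> m" "(\<Sum>l\<in>{0, 1, 2} - {i}. \<alpha> l) = \<alpha> j + \<alpha> m"
    "(\<Sum>l\<in>{0, 1, 2} - {j}. \<alpha> l) = \<alpha> i + \<alpha> m"
    using indices by simp_all
  show ?thesis
    unfolding Diff_iff Un_iff D_iff sums total outside by auto
qed

lemma bij_betw_dof_multi_index:
  "bij_betw dof_multi_index dofs edge_indices"
proof -
  define dof where "dof \<alpha> = (\<alpha> m, \<alpha> i - (r0 + 1 - \<alpha> m), \<alpha> j - (r0 + 1 - \<alpha> m))" for \<alpha> :: "nat \<Rightarrow> nat"
  show ?thesis
  proof (rule bij_betw_byWitness[where f' = dof])
    show "\<forall>t\<in>dofs. dof (dof_multi_index t) = t"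
      by (auto simp: dof_def dof_multi_index_apply)
    show "\<forall>\<alpha>\<in>edge_indices. dof_multi_index (dof \<alpha>) = \<alpha>"
    proof
      fix \<alpha> assume "\<alpha> \<in> edge_indices"
      then have \<alpha>: "\<forall>l. l \<notin> {i, j, m} \<longrightarrow> \<alpha> l = 0" "r0 < \<alpha> i + \<alpha> m" "r0 < \<alpha> j + \<alpha> m"
        unfolding mem_edge_indices_iff by auto
      show "dof_multi_index (dof \<alpha>) = \<alpha>"
      proof
        fix l
        show "dof_multi_index (dof \<alpha>) l = \<alpha> l"
          using \<alpha> by (cases "l \<in> {i, j, m}") (auto simp: dof_def dof_multi_index_apply)
      qed
    qed
    show "dof_multi_index ` dofs \<subseteq> edge_indices"
    proof
      fix \<alpha> assume "\<alpha> \<in> dof_multi_index ` dofs"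
      then obtain \<beta> a b where "(\<beta>, a, b) \<in> dofs" "\<alpha> = dof_multi_index (\<beta>, a, b)" by auto
      then show "\<alpha> \<in> edge_indices"
        using r1_le_r0 unfolding mem_edge_indices_iff by (auto simp: dof_multi_index_apply dofs_def)
    qed
    show "dof ` edge_indices \<subseteq> dofs"
    proof
      fix t assume "t \<in> dof ` edge_indices"
      then obtain \<alpha> where "\<alpha> \<in> edge_indices" "t = dof \<alpha>" by auto
      then show "t \<in> dofs"
        using r1_le_r0 unfolding mem_edge_indices_iff
        by (auto simp: dof_def dofs_def split: nat_diff_split)
    qed
  qed
qed

lemma ndir_deriv_edge_dofs:
  assumes lower: "\<And>t. t \<in> dofs \<Longrightarrow> fst t < \<beta> \<Longrightarrow> c t = 0"
  shows "ndir_deriv \<beta> (\<lambda>x. \<Sum>t\<in>dofs. c t * bary_mono V (dof_multi_index t) x) n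
      (V i + s *\<^sub>R (V j - V i))
    = fact \<beta> * bary_slope V m n ^ \<beta> * ((1 - s) * s) ^ (r0 + 1 - \<beta>)
      * (\<Sum>(a, b)\<in>{p. (\<beta>, p) \<in> dofs}. c (\<beta>, a, b) * (1 - s) ^ a * s ^ b)"
proof -
  define q where "q = r0 + 1 - \<beta>"
  define F where
    "F t = c t * bary_slope V m n ^ \<beta> * (1 - s) ^ (fst (snd t) + q) * s ^ (snd (snd t) + q)"
    for t :: "nat \<times> nat \<times> nat"
  have "c t * coeff (bary_mono_line V (dof_multi_index t) (V i + s *\<^sub>R (V j - V i)) n) \<beta>
      = (if fst t = \<beta> then F t else 0)" if "t \<in> dofs" for t
  proof (cases "fst t < \<beta>")
    case True
    then show ?thesis using lower[OF that] by simp
  next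
    case False
    then show ?thesis
      by (cases t) (auto simp: coeff_bary_mono_line_edge dof_multi_index_apply F_def q_def)
  qed
  then have "(\<Sum>t\<in>dofs. c t
      * coeff (bary_mono_line V (dof_multi_index t) (V i + s *\<^sub>R (V j - V i)) n) \<beta>)
      = (\<Sum>t\<in>{t \<in> dofs. fst t = \<beta>}. F t)"
    by (simp add: sum.inter_filter[OF finite_dofs])
  also have "\<dots> = (\<Sum>p\<in>{p. (\<beta>, p) \<in> dofs}. F (\<beta>, p))"
  proof -
    have "{t \<in> dofs. fst t = \<beta>} = Pair \<beta> ` {p. (\<beta>, p) \<in> dofs}" by force
    then show ?thesis by (simp add: sum.reindex inj_on_def)
  qed
  also have "\<dots> = bary_slope V m n ^ \<beta> * ((1 - s) * s) ^ q
      * (\<Sum>(a, b)\<in>{p. (\<beta>, p) \<in> dofs}. c (\<beta>, a, b) * (1 - s) ^ a * s ^ b)"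
    by (simp add: F_def sum_distrib_left split_def power_add power_mult_distrib mult_ac)
  finally show ?thesis
    by (simp add: ndir_deriv_bary_sum q_def mult.assoc)
qed

lemma edge_moments_unisolvent:
  assumes zero: "\<And>\<beta> a b. (\<beta>, a, b) \<in> dofs \<Longrightarrow>
    edge_moment V i j n \<beta> a b (\<lambda>x. \<Sum>t\<in>dofs. c t * bary_mono V (dof_multi_index t) x) = 0"
  shows "\<forall>t\<in>dofs. c t = 0"
proof -
  have "\<forall>t\<in>dofs. fst t < \<beta> \<longrightarrow> c t = 0" for \<beta>
  proof (induction \<beta>)
    case (Suc \<beta>)
    define A where "A = {p. (\<beta>, p) \<in> dofs}"
    define h where "h = (\<lambda>s. \<Sum>(a, b)\<in>A. c (\<beta>, a, b) * (1 - s) ^ a * s ^ b)"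
    have "\<forall>p\<in>A. c (\<beta>, p) = 0"
    proof (rule weighted_bernstein_orthogonal_imp_zero[where C = "\<lambda>p. c (\<beta>, p)", OF _ h_def])
      show "A \<subseteq> {(a, b). a + b = k + \<beta> - 2 * (r0 + 1)}"
        by (auto simp: A_def dofs_def)
      fix a b assume "(a, b) \<in> A"
      have "(let x = V i + s *\<^sub>R (V j - V i) in
          ndir_deriv \<beta> (\<lambda>x. \<Sum>t\<in>dofs. c t * bary_mono V (dof_multi_index t) x) n x
            * bary V i x ^ a * bary V j x ^ b)
        = (fact \<beta> * bary_slope V m n ^ \<beta>)
          * (((1 - s) * s) ^ (r0 + 1 - \<beta>) * h s * (1 - s) ^ a * s ^ b)"
        for s
        using Suc.IH indices
        by (simp add: ndir_deriv_edge_dofs bary_edge h_def A_def mult_ac)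
      then have "edge_moment V i j n \<beta> a b (\<lambda>x. \<Sum>t\<in>dofs. c t * bary_mono V (dof_multi_index t) x)
        = dist (V i) (V j) * (fact \<beta> * bary_slope V m n ^ \<beta>)
          * integral {0..1} (\<lambda>s. ((1 - s) * s) ^ (r0 + 1 - \<beta>) * h s * (1 - s) ^ a * s ^ b)"
        by (simp add: edge_moment_def)
      then show "integral {0..1} (\<lambda>s. ((1 - s) * s) ^ (r0 + 1 - \<beta>) * h s * (1 - s) ^ a * s ^ b) = 0"
        using zero[of \<beta> a b] \<open>(a, b) \<in> A\<close> edge_vertices_distinct
          bary_slope_normal_nonzero[OF normal]
        by (simp add: A_def)
    qed
    then show ?case
      using Suc.IH by (auto simp: A_def less_Suc_eq)
  qed simp
  then show ?thesis by auto
qed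

end


theorem mainTheorem10:
  fixes V :: "nat \<Rightarrow> real \<times> real" and r0 r1 k i j :: nat and n :: "real \<times> real"
  assumes "r1 \<le> r0" and "2 * r0 + 1 \<le> k"
    and "nondeg_triangle V"
    and "i \<in> {0,1,2}" and "j \<in> {0,1,2}" and "i \<noteq> j"
    and "norm n = 1" and "inner n (V j - V i) = 0"
  shows "bij_betw
           (\<lambda>u. restrict (\<lambda>(\<beta>, a, b). edge_moment V i j n \<beta> a b u)
                 {(\<beta>, a, b). \<beta> \<le> r1 \<and> a + b + 2 * (r0 + 1) = k + \<beta>})
           (Pk V (D k {i, j} r1 - (D k {i} r0 \<union> D k {j} r0)))
           ({(\<beta>, a, b). \<beta> \<le> r1 \<and> a + b + 2 * (r0 + 1) = k + \<beta>} \<rightarrow>\<^sub>E (UNIV :: real set))"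
proof -
  interpret edge_dofs V i j "3 - i - j" n k r0 r1
    using assms by unfold_locales auto
  have "bij_betw (\<lambda>u. restrict (\<lambda>(\<beta>, a, b). edge_moment V i j n \<beta> a b u) dofs)
      {u. \<exists>c. u = (\<lambda>x. \<Sum>t\<in>dofs. c t * bary_mono V (dof_multi_index t) x)} (dofs \<rightarrow>\<^sub>E UNIV)"
  proof (rule bij_betw_restrict_unisolvent[OF finite_dofs])
    show "(\<lambda>(\<beta>, a, b). edge_moment V i j n \<beta> a b
          (\<lambda>x. \<Sum>s\<in>dofs. c s * bary_mono V (dof_multi_index s) x)) t
        = (\<Sum>s\<in>dofs. c s
          * (\<lambda>(\<beta>, a, b). edge_moment V i j n \<beta> a b (bary_mono V (dof_multi_index s))) t)"
      for c t by (simp add: edge_moment_sum[OF finite_dofs] split_def)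
  qed (use edge_moments_unisolvent in auto)
  then show ?thesis
    by (simp add: Pk_reindex[OF bij_betw_dof_multi_index] dofs_def)
qed

end
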